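(* With the matrices defined in the context, the Neumann Schur complement $S_N:=\mathbf{B}\mathbf{A_N}^{-1}\mathbf{B}^T$ satisfies $S_N^\dagger=S_N$.
   Context: Fix an integer $n\ge 2$ and set $h=1/n$. Let $I_m$ denote the $m\times m$ identity matrix and $\otimes$ the Kronecker product. Let $\mathrm{B}\in\mathbb{R}^{n\times(n-1)}$ be $\mathrm{B}=\frac1h M$, where $M_{i,i}=1$ and $M_{i+1,i}=-1$ for $1\le i\le n-1$, all other entries $0$. Define $\mathrm{B}^u_x=I_n\otimes \mathrm{B}$, $\mathrm{B}^v_y=\mathrm{B}\otimes I_n$, $\mathrm{B}^q_x=I_{n-1}\otimes\mathrm{B}$, $\mathrm{B}^q_y=\mathrm{B}\otimes I_{n-1}$. Let $\mathbf{B}=\begin{bmatrix}-\mathrm{B}^u_x & -\mathrm{B}^v_y\end{bmatrix}\in\mathbb{R}^{n^2\times 2n(n-1)}$ and $\mathbf{C}=\begin{bmatrix}-(\mathrm{B}^q_y)^T & (\mathrm{B}^q_x)^T\end{bmatrix}\in\mathbb{R}^{(n-1)^2\times 2n(n-1)}$, and let $\mathbf{A_N}=\mathbf{B}^T\mathbf{B}+\mathbf{C}^T\mathbf{C}$ (which is invertible). The superscript $\dagger$ denotes the Moore–Penrose pseudoinverse. *)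

theory Defs
  imports "Jordan_Normal_Form.Matrix"
begin

definition kron :: "real mat \<Rightarrow> real mat \<Rightarrow> real mat" where
  "kron A B = mat (dim_row A * dim_row B) (dim_col A * dim_col B)
     (\<lambda>(i,j). A $$ (i div dim_row B, j div dim_col B) * B $$ (i mod dim_row B, j mod dim_col B))"

definition hcat :: "real mat \<Rightarrow> real mat \<Rightarrow> real mat" where
  "hcat A B = mat (dim_row A) (dim_col A + dim_col B)
     (\<lambda>(i,j). if j < dim_col A then A $$ (i,j) else B $$ (i, j - dim_col A))"

definition Mmat :: "nat \<Rightarrow> real mat" where
  "Mmat n = mat n (n - 1) (\<lambda>(i,j). if i = j then 1 else if i = j + 1 then -1 else 0)"

(* B = (1/h) M with h = 1/n *)
definition Bmat :: "nat \<Rightarrow> real mat" where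
  "Bmat n = (1 / (1 / real n)) \<cdot>\<^sub>m Mmat n"

definition Bux :: "nat \<Rightarrow> real mat" where "Bux n = kron (1\<^sub>m n) (Bmat n)"
definition Bvy :: "nat \<Rightarrow> real mat" where "Bvy n = kron (Bmat n) (1\<^sub>m n)"
definition Bqx :: "nat \<Rightarrow> real mat" where "Bqx n = kron (1\<^sub>m (n - 1)) (Bmat n)"
definition Bqy :: "nat \<Rightarrow> real mat" where "Bqy n = kron (Bmat n) (1\<^sub>m (n - 1))"

definition BB :: "nat \<Rightarrow> real mat" where
  "BB n = hcat (- Bux n) (- Bvy n)"

definition CC :: "nat \<Rightarrow> real mat" where
  "CC n = hcat (- (transpose_mat (Bqy n))) (transpose_mat (Bqx n))"

definition AN :: "nat \<Rightarrow> real mat" where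
  "AN n = transpose_mat (BB n) * BB n + transpose_mat (CC n) * CC n"

definition mat_inv :: "real mat \<Rightarrow> real mat" where
  "mat_inv A = (THE X. X \<in> carrier_mat (dim_row A) (dim_row A) \<and>
                      A * X = 1\<^sub>m (dim_row A) \<and> X * A = 1\<^sub>m (dim_row A))"

definition is_pinv :: "real mat \<Rightarrow> real mat \<Rightarrow> bool" where
  "is_pinv A X \<longleftrightarrow> X \<in> carrier_mat (dim_col A) (dim_row A) \<and>
     A * X * A = A \<and> X * A * X = X \<and>
     transpose_mat (A * X) = A * X \<and> transpose_mat (X * A) = X * A"

definition pinv :: "real mat \<Rightarrow> real mat" where
  "pinv A = (THE X. is_pinv A X)"

definition SN :: "nat \<Rightarrow> real mat" where
  "SN n = BB n * mat_inv (AN n) * transpose_mat (BB n)"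

end

theory Submission
  imports Defs "Jordan_Normal_Form.Determinant"
begin

text \<open>
  Write \<open>A = B\<^sup>T B + C\<^sup>T C\<close>. Since \<open>B C\<^sup>T = 0\<close> (the discrete divergence annihilates discrete
  curls) and \<open>B\<close>, \<open>C\<close> have no common kernel vector, \<open>A\<close> is positive definite, and
  \<open>B A\<^sup>-\<^sup>1 C\<^sup>T = 0\<close>. Hence \<open>B\<^sup>T B A\<^sup>-\<^sup>1 B\<^sup>T = A A\<^sup>-\<^sup>1 B\<^sup>T = B\<^sup>T\<close>, so \<open>S = B A\<^sup>-\<^sup>1 B\<^sup>T\<close> is a
  symmetric idempotent, i.e. an orthogonal projection, and an orthogonal projection satisfies the
  four Penrose equations with itself as pseudoinverse. The common kernel is trivial because
  \<open>B\<^sup>u\<^sub>x\<close> and \<open>B\<^sup>v\<^sub>y\<close> are injective and the mixed-product rule for Kronecker products gives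
  \<open>(B\<^sup>u\<^sub>x)\<^sup>T B\<^sup>v\<^sub>y = B\<^sup>q\<^sub>y (B\<^sup>q\<^sub>x)\<^sup>T\<close>.
\<close>

section \<open>Kronecker products and block rows\<close>

lemma sum_lessThan_mult:
  "(\<Sum>k<m*p. f k) = (\<Sum>a<m. \<Sum>b<p. f (a*p+b::nat))"
  by (simp add: sum.nat_group[symmetric] sum.atLeastLessThan_shift_0[of f] atLeast0LessThan o_def)

lemma div_mod_less_mult:
  assumes "i < m * (p::nat)"
  shows "i div p < m" "i mod p < p"
proof -
  have "p > 0" using assms by (cases p) auto
  then show "i div p < m" "i mod p < p" using assms by (auto simp: less_mult_imp_div_less)
qed

lemma mult_add_less_mult:
  assumes "a < m" "b < (p::nat)"
  shows "a * p + b < m * p"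
  using assms mult_le_mono1[of "Suc a" m p] by simp

lemma dim_kron[simp]:
  "dim_row (kron A B) = dim_row A * dim_row B" "dim_col (kron A B) = dim_col A * dim_col B"
  by (auto simp: kron_def)

lemma index_kron[simp]:
  "i < dim_row A * dim_row B \<Longrightarrow> j < dim_col A * dim_col B \<Longrightarrow>
   kron A B $$ (i,j) = A $$ (i div dim_row B, j div dim_col B) * B $$ (i mod dim_row B, j mod dim_col B)"
  by (simp add: kron_def)

lemma kron_mult_kron:
  assumes A: "A \<in> carrier_mat ra ca" and B: "B \<in> carrier_mat rb cb"
    and C: "C \<in> carrier_mat ca cc" and D: "D \<in> carrier_mat cb cd"
  shows "kron A B * kron C D = kron (A * C) (B * D)"
proof (rule eq_matI)
  fix i j assume "i < dim_row (kron (A * C) (B * D))" "j < dim_col (kron (A * C) (B * D))"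
  then have i: "i < ra * rb" and j: "j < cc * cd" using A B C D by auto
  note ij = div_mod_less_mult[OF i] div_mod_less_mult[OF j]
  have "(kron A B * kron C D) $$ (i,j) = (\<Sum>k<ca*cb. kron A B $$ (i,k) * kron C D $$ (k,j))"
    using A B C D i j by (simp add: scalar_prod_def atLeast0LessThan)
  also have "\<dots> = (\<Sum>a<ca. \<Sum>b<cb. (A $$ (i div rb, a) * B $$ (i mod rb, b))
       * (C $$ (a, j div cd) * D $$ (b, j mod cd)))"
    unfolding sum_lessThan_mult using A B C D i j by (intro sum.cong refl) (auto simp: mult_add_less_mult)
  also have "\<dots> = (\<Sum>a<ca. A $$ (i div rb, a) * C $$ (a, j div cd))
       * (\<Sum>b<cb. B $$ (i mod rb, b) * D $$ (b, j mod cd))"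
    by (simp add: sum_product mult_ac)
  also have "\<dots> = kron (A * C) (B * D) $$ (i,j)"
    using A B C D i j ij by (simp add: scalar_prod_def atLeast0LessThan)
  finally show "(kron A B * kron C D) $$ (i,j) = kron (A * C) (B * D) $$ (i,j)" .
qed (use A B C D in auto)

lemma transpose_kron: "transpose_mat (kron A B) = kron (transpose_mat A) (transpose_mat B)"
proof (rule eq_matI)
  fix i j assume "i < dim_row (kron (transpose_mat A) (transpose_mat B))"
    "j < dim_col (kron (transpose_mat A) (transpose_mat B))"
  then have i: "i < dim_col A * dim_col B" and j: "j < dim_row A * dim_row B" by auto
  show "transpose_mat (kron A B) $$ (i, j) = kron (transpose_mat A) (transpose_mat B) $$ (i, j)"
    using i j div_mod_less_mult[OF i] div_mod_less_mult[OF j] by simp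
qed auto

lemma kron_one_one: "kron (1\<^sub>m p) (1\<^sub>m q) = 1\<^sub>m (p * q)"
proof (rule eq_matI)
  fix i j assume "i < dim_row (1\<^sub>m (p * q))" "j < dim_col (1\<^sub>m (p * q))"
  then have i: "i < p * q" and j: "j < p * q" by auto
  have "(i div q = j div q \<and> i mod q = j mod q) = (i = j)"
    by (metis div_mult_mod_eq)
  then show "kron (1\<^sub>m p) (1\<^sub>m q) $$ (i, j) = 1\<^sub>m (p * q) $$ (i, j)"
    using i j div_mod_less_mult[OF i] div_mod_less_mult[OF j] by auto
qed auto

lemma dim_hcat[simp]:
  "dim_row (hcat A B) = dim_row A" "dim_col (hcat A B) = dim_col A + dim_col B"
  by (auto simp: hcat_def)

lemma row_hcat:
  assumes "dim_row B = dim_row A" "i < dim_row A"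
  shows "row (hcat A B) i = row A i @\<^sub>v row B i"
  using assms by (intro eq_vecI) (auto simp: hcat_def)

lemma hcat_mult_transpose_hcat:
  assumes A: "A \<in> carrier_mat r ca" and B: "B \<in> carrier_mat r cb"
    and C: "C \<in> carrier_mat s ca" and D: "D \<in> carrier_mat s cb"
  shows "hcat A B * transpose_mat (hcat C D) = A * transpose_mat C + B * transpose_mat D"
  using assms by (intro eq_matI) (auto simp: row_hcat scalar_prod_append[of _ ca _ cb])

lemma hcat_mult_append_vec:
  assumes A: "A \<in> carrier_mat r ca" and B: "B \<in> carrier_mat r cb"
    and u: "u \<in> carrier_vec ca" and w: "w \<in> carrier_vec cb"
  shows "hcat A B *\<^sub>v (u @\<^sub>v w) = A *\<^sub>v u + B *\<^sub>v w"
  using assms by (intro eq_vecI) (auto simp: row_hcat scalar_prod_append[of _ ca _ cb])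

section \<open>Real inner products and kernels\<close>

lemma scalar_prod_self_ge_0: "0 \<le> (v :: real vec) \<bullet> v"
  using conjugate_square_ge_0_vec[of v] by simp

lemma scalar_prod_self_eq_0_iff: "(v :: real vec) \<in> carrier_vec n \<Longrightarrow> v \<bullet> v = 0 \<longleftrightarrow> v = 0\<^sub>v n"
  using conjugate_square_eq_0_vec[of v n] by simp

lemma scalar_prod_gram_mult_vec:
  assumes M: "(M :: real mat) \<in> carrier_mat r c" and v: "v \<in> carrier_vec c"
  shows "v \<bullet> ((transpose_mat M * M) *\<^sub>v v) = (M *\<^sub>v v) \<bullet> (M *\<^sub>v v)"
proof -
  have "v \<bullet> ((transpose_mat M * M) *\<^sub>v v) = (transpose_mat M *\<^sub>v (M *\<^sub>v v)) \<bullet> v"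
    using M v by (subst comm_scalar_prod[of _ c]) auto
  then show ?thesis using transpose_vec_mult_scalar[OF M v, of "M *\<^sub>v v"] M v by simp
qed

lemma transpose_mult_self_eq_0:
  assumes M: "(M :: real mat) \<in> carrier_mat r c" and MM: "transpose_mat M * M = 0\<^sub>m c c"
  shows "M = 0\<^sub>m r c"
proof (rule eq_matI)
  fix i j assume "i < dim_row (0\<^sub>m r c)" "j < dim_col (0\<^sub>m r c)"
  then have i: "i < r" and j: "j < c" by auto
  have "col M j \<bullet> col M j = (transpose_mat M * M) $$ (j, j)" using M j by simp
  then have "col M j = 0\<^sub>v r" using MM M j scalar_prod_self_eq_0_iff[of "col M j" r] by simp
  then have "col M j $ i = 0" using i by simp
  then show "M $$ (i,j) = 0\<^sub>m r c $$ (i,j)" using M i j by simp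
qed (use M in auto)

lemma add_eq_0_vec_imp_eq_uminus:
  assumes "a \<in> carrier_vec n" "b \<in> carrier_vec n" "a + b = 0\<^sub>v n"
  shows "a = - (b :: 'a :: group_add vec)"
proof (rule eq_vecI)
  fix i assume "i < dim_vec (- b)"
  then have "(a + b) $ i = 0" unfolding assms(3) using assms by simp
  then show "a $ i = (- b) $ i" using \<open>i < dim_vec (- b)\<close> assms(1,2) by (simp add: eq_neg_iff_add_eq_0)
qed (use assms in simp)

lemma left_inverse_kernel_trivial:
  fixes L M :: "real mat"
  assumes L: "L \<in> carrier_mat m r" and M: "M \<in> carrier_mat r m" and LM: "L * M = 1\<^sub>m m"
    and u: "u \<in> carrier_vec m" and Mu: "M *\<^sub>v u = 0\<^sub>v r"
  shows "u = 0\<^sub>v m"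
proof -
  have "u = (L * M) *\<^sub>v u" using LM u by simp
  also have "\<dots> = L *\<^sub>v 0\<^sub>v r" using L M u Mu by simp
  also have "\<dots> = 0\<^sub>v m" using L by (intro eq_vecI) auto
  finally show ?thesis .
qed

lemma kernel_pair_trivial:
  fixes P Q R T :: "real mat"
  assumes P: "P \<in> carrier_mat r m" and Q: "Q \<in> carrier_mat r k"
    and R: "R \<in> carrier_mat s m" and T: "T \<in> carrier_mat s k"
    and PQ: "transpose_mat P * Q = transpose_mat R * T"
    and P_inj: "\<And>u. u \<in> carrier_vec m \<Longrightarrow> P *\<^sub>v u = 0\<^sub>v r \<Longrightarrow> u = 0\<^sub>v m"
    and Q_inj: "\<And>w. w \<in> carrier_vec k \<Longrightarrow> Q *\<^sub>v w = 0\<^sub>v r \<Longrightarrow> w = 0\<^sub>v k"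
    and u: "u \<in> carrier_vec m" and w: "w \<in> carrier_vec k"
    and sum0: "P *\<^sub>v u + Q *\<^sub>v w = 0\<^sub>v r" and RT: "R *\<^sub>v u = T *\<^sub>v w"
  shows "u = 0\<^sub>v m \<and> w = 0\<^sub>v k"
proof -
  have Pu: "P *\<^sub>v u = - (Q *\<^sub>v w)"
    using add_eq_0_vec_imp_eq_uminus[OF mult_mat_vec_carrier[OF P u] mult_mat_vec_carrier[OF Q w] sum0] .
  \<comment> \<open>\<open>(Q w)\<bullet>(P u) = (T w)\<bullet>(R u)\<close> turns the two equations into \<open>-|Q w|\<^sup>2 = |R u|\<^sup>2\<close>.\<close>
  have "(Q *\<^sub>v w) \<bullet> (P *\<^sub>v u) = ((transpose_mat P * Q) *\<^sub>v w) \<bullet> u"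
    using transpose_vec_mult_scalar[OF P u, of "Q *\<^sub>v w"] P Q w by simp
  also have "\<dots> = (T *\<^sub>v w) \<bullet> (R *\<^sub>v u)"
    unfolding PQ using transpose_vec_mult_scalar[OF R u, of "T *\<^sub>v w"] R T w by simp
  finally have "- ((Q *\<^sub>v w) \<bullet> (Q *\<^sub>v w)) = (R *\<^sub>v u) \<bullet> (R *\<^sub>v u)"
    unfolding Pu RT using Q w by simp
  then have "(Q *\<^sub>v w) \<bullet> (Q *\<^sub>v w) = 0"
    using scalar_prod_self_ge_0[of "Q *\<^sub>v w"] scalar_prod_self_ge_0[of "R *\<^sub>v u"] by linarith
  then have "Q *\<^sub>v w = 0\<^sub>v r" using scalar_prod_self_eq_0_iff[OF mult_mat_vec_carrier[OF Q w]] by simp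
  moreover from this have "P *\<^sub>v u = 0\<^sub>v r" unfolding Pu by simp
  ultimately show ?thesis using P_inj[OF u] Q_inj[OF w] by simp
qed

section \<open>The Moore--Penrose pseudoinverse\<close>

lemma is_pinv_transpose:
  assumes "is_pinv A X"
  shows "is_pinv (transpose_mat A) (transpose_mat X)"
proof -
  obtain r c where A: "A \<in> carrier_mat r c" by blast
  then have X: "X \<in> carrier_mat c r" using assms by (simp add: is_pinv_def)
  have "transpose_mat A * transpose_mat X * transpose_mat A = transpose_mat (A * X * A)"
    using A X by (simp add: transpose_mult[OF A mult_carrier_mat[OF X A]] transpose_mult[OF X A])
  moreover have "transpose_mat X * transpose_mat A * transpose_mat X = transpose_mat (X * A * X)"
    using A X by (simp add: transpose_mult[OF X mult_carrier_mat[OF A X]] transpose_mult[OF A X])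
  moreover have "transpose_mat A * transpose_mat X = transpose_mat (X * A)"
    and "transpose_mat X * transpose_mat A = transpose_mat (A * X)"
    using A X by (simp_all add: transpose_mult)
  ultimately show ?thesis using assms A X by (auto simp: is_pinv_def)
qed

lemma is_pinv_absorb:
  assumes X: "is_pinv A X" and Y: "is_pinv A Y"
  shows "X = X * A * Y"
proof -
  obtain r c where A: "A \<in> carrier_mat r c" by blast
  then have Xc: "X \<in> carrier_mat c r" and Yc: "Y \<in> carrier_mat c r"
    using X Y by (simp_all add: is_pinv_def)
  have XtAt: "transpose_mat X * transpose_mat A = A * X"
    using X A Xc by (simp add: is_pinv_def transpose_mult[OF A Xc, symmetric])
  have AtAY: "transpose_mat A * (A * Y) = transpose_mat A"
  proof -
    have "transpose_mat A = transpose_mat (A * Y * A)" using Y by (simp add: is_pinv_def)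
    also have "\<dots> = transpose_mat A * transpose_mat (A * Y)"
      using transpose_mult[OF mult_carrier_mat[OF A Yc] A] .
    finally show ?thesis using Y by (simp add: is_pinv_def)
  qed
  have "X = X * (A * X)" using X A Xc by (simp add: is_pinv_def)
  also have "\<dots> = X * (transpose_mat X * transpose_mat A)" using XtAt by simp
  also have "\<dots> = X * (transpose_mat X * (transpose_mat A * (A * Y)))" using AtAY by simp
  also have "\<dots> = X * ((transpose_mat X * transpose_mat A) * (A * Y))"
    using A Xc Yc by (subst assoc_mult_mat[of "transpose_mat X" r c]) auto
  also have "\<dots> = X * (A * X) * (A * Y)"
    unfolding XtAt by (simp add: assoc_mult_mat[OF Xc mult_carrier_mat[OF A Xc] mult_carrier_mat[OF A Yc]])
  also have "\<dots> = X * A * Y" using X A Xc Yc by (simp add: is_pinv_def)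
  finally show ?thesis .
qed

lemma pinv_unique:
  assumes X: "is_pinv A X" and Y: "is_pinv A Y"
  shows "X = Y"
proof -
  obtain r c where A: "A \<in> carrier_mat r c" by blast
  then have Xc: "X \<in> carrier_mat c r" and Yc: "Y \<in> carrier_mat c r"
    using X Y by (simp_all add: is_pinv_def)
  have "transpose_mat Y = transpose_mat Y * transpose_mat A * transpose_mat X"
    using is_pinv_absorb[OF is_pinv_transpose[OF Y] is_pinv_transpose[OF X]] .
  also have "\<dots> = transpose_mat (X * A * Y)"
    using A Xc Yc by (simp add: transpose_mult[OF Xc mult_carrier_mat[OF A Yc]] transpose_mult[OF A Yc])
  finally show ?thesis using is_pinv_absorb[OF X Y] by (metis transpose_transpose)
qed

lemma pinv_eqI: "is_pinv A X \<Longrightarrow> pinv A = X"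
  unfolding pinv_def using pinv_unique by blast

lemma pinv_symmetric_idempotent:
  assumes "S \<in> carrier_mat n n" "transpose_mat S = S" "S * S = S"
  shows "pinv S = S"
  using assms by (intro pinv_eqI) (simp add: is_pinv_def)

section \<open>Schur complements of Gram sums\<close>

lemma mat_inv_eqI:
  assumes A: "A \<in> carrier_mat n n" and P: "P \<in> carrier_mat n n"
    and AP: "A * P = 1\<^sub>m n" and PA: "P * A = 1\<^sub>m n"
  shows "mat_inv A = P"
  unfolding mat_inv_def
proof (rule the_equality)
  fix X assume "X \<in> carrier_mat (dim_row A) (dim_row A) \<and> A * X = 1\<^sub>m (dim_row A) \<and> X * A = 1\<^sub>m (dim_row A)"
  then have X: "X \<in> carrier_mat n n" and AX: "A * X = 1\<^sub>m n" using A by auto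
  have "X = (P * A) * X" using PA X by simp
  also have "\<dots> = P" using assoc_mult_mat[OF P A X] AX P by simp
  finally show "X = P" .
qed (use assms in simp)

lemma transpose_inverse_of_symmetric:
  fixes A P :: "real mat"
  assumes A: "A \<in> carrier_mat n n" and P: "P \<in> carrier_mat n n" and At: "transpose_mat A = A"
    and AP: "A * P = 1\<^sub>m n" and PA: "P * A = 1\<^sub>m n"
  shows "transpose_mat P = P"
proof -
  have APt: "A * transpose_mat P = 1\<^sub>m n"
    using arg_cong[OF PA, of transpose_mat] transpose_mult[OF P A] At by simp
  have "transpose_mat P = (P * A) * transpose_mat P" using PA P by simp
  also have "\<dots> = P" using assoc_mult_mat[OF P A transpose_carrier_mat[THEN iffD2, OF P]] APt P by simp
  finally show ?thesis .
qed

lemma det_neq_0_imp_inverse: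
  fixes A :: "real mat"
  assumes "A \<in> carrier_mat n n" and "det A \<noteq> 0"
  obtains P where "P \<in> carrier_mat n n" "P * A = 1\<^sub>m n" "A * P = 1\<^sub>m n"
  using det_non_zero_imp_unit[OF assms, of "()"] unfolding Units_def ring_mat_def by auto

lemma det_gram_sum_neq_0:
  fixes B C :: "real mat"
  assumes B: "B \<in> carrier_mat r N" and C: "C \<in> carrier_mat s N"
    and ker: "\<And>v. v \<in> carrier_vec N \<Longrightarrow> B *\<^sub>v v = 0\<^sub>v r \<Longrightarrow> C *\<^sub>v v = 0\<^sub>v s \<Longrightarrow> v = 0\<^sub>v N"
  shows "det (transpose_mat B * B + transpose_mat C * C) \<noteq> 0"
proof
  let ?A = "transpose_mat B * B + transpose_mat C * C"
  have A: "?A \<in> carrier_mat N N" using B C by simp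
  assume "det ?A = 0"
  then obtain v where v: "v \<in> carrier_vec N" "v \<noteq> 0\<^sub>v N" and Av: "?A *\<^sub>v v = 0\<^sub>v N"
    using det_0_iff_vec_prod_zero[OF A] by auto
  have "0 = v \<bullet> (?A *\<^sub>v v)" using Av v by simp
  also have "\<dots> = v \<bullet> ((transpose_mat B * B) *\<^sub>v v) + v \<bullet> ((transpose_mat C * C) *\<^sub>v v)"
    using B C v by (simp add: add_mult_distrib_mat_vec[of _ N N] scalar_prod_add_distrib[of _ N])
  also have "\<dots> = (B *\<^sub>v v) \<bullet> (B *\<^sub>v v) + (C *\<^sub>v v) \<bullet> (C *\<^sub>v v)"
    using scalar_prod_gram_mult_vec[OF B v(1)] scalar_prod_gram_mult_vec[OF C v(1)] by simp
  finally have "(B *\<^sub>v v) \<bullet> (B *\<^sub>v v) = 0" "(C *\<^sub>v v) \<bullet> (C *\<^sub>v v) = 0"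
    using scalar_prod_self_ge_0[of "B *\<^sub>v v"] scalar_prod_self_ge_0[of "C *\<^sub>v v"] by linarith+
  then have "v = 0\<^sub>v N"
    using B C v by (intro ker) (auto simp: scalar_prod_self_eq_0_iff[of _ r] scalar_prod_self_eq_0_iff[of _ s])
  with v(2) show False ..
qed

lemma gram_sum_inverse_orthogonal:
  fixes B C P :: "real mat"
  assumes B: "B \<in> carrier_mat r N" and C: "C \<in> carrier_mat s N" and P: "P \<in> carrier_mat N N"
    and BC: "B * transpose_mat C = 0\<^sub>m r s"
    and AP: "(transpose_mat B * B + transpose_mat C * C) * P = 1\<^sub>m N"
  shows "B * P * transpose_mat C = 0\<^sub>m r s"
proof -
  \<comment> \<open>Multiplying \<open>A P C\<^sup>T = C\<^sup>T\<close> by \<open>B\<close> gives \<open>B B\<^sup>T W = 0\<close>, hence \<open>B\<^sup>T W = 0\<close> and \<open>W\<^sup>T W = 0\<close>.\<close>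
  define W where "W = B * (P * transpose_mat C)"
  have W: "W \<in> carrier_mat r s" using B C P by (simp add: W_def)
  have PCt: "P * transpose_mat C \<in> carrier_mat N s" using C P by simp
  have Bt: "transpose_mat B \<in> carrier_mat N r" and Ct: "transpose_mat C \<in> carrier_mat N s"
    using B C by simp_all
  have A: "transpose_mat B * B + transpose_mat C * C \<in> carrier_mat N N" using B C by simp
  have "(transpose_mat B * B + transpose_mat C * C) * (P * transpose_mat C) = transpose_mat C"
    using assoc_mult_mat[OF A P Ct, symmetric] AP Ct by simp
  then have "transpose_mat B * W + transpose_mat C * (C * (P * transpose_mat C)) = transpose_mat C"
    unfolding W_def using B C PCt
    by (simp add: add_mult_distrib_mat[of _ N N _ _ s] assoc_mult_mat[OF Bt B PCt] assoc_mult_mat[OF Ct C PCt])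
  moreover have CPCt: "C * (P * transpose_mat C) \<in> carrier_mat s s" using C PCt by simp
  ultimately have "B * (transpose_mat B * W) + (B * transpose_mat C) * (C * (P * transpose_mat C))
      = B * transpose_mat C"
    using mult_add_distrib_mat[OF B mult_carrier_mat[OF Bt W] mult_carrier_mat[OF Ct CPCt]]
      assoc_mult_mat[OF B Ct CPCt] by simp
  then have BBtW: "B * (transpose_mat B * W) = 0\<^sub>m r s"
    using B Bt W CPCt BC left_mult_zero_mat[OF CPCt, of r] by simp
  have "transpose_mat (transpose_mat B * W) * (transpose_mat B * W) = transpose_mat W * (B * (transpose_mat B * W))"
    using transpose_mult[OF Bt W] assoc_mult_mat[OF transpose_carrier_mat[THEN iffD2, OF W] B mult_carrier_mat[OF Bt W]]
    by simp
  then have BtW: "transpose_mat B * W = 0\<^sub>m N s"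
    using BBtW B W by (intro transpose_mult_self_eq_0[of _ N s]) auto
  have "transpose_mat W * W = transpose_mat (P * transpose_mat C) * (transpose_mat B * W)"
    unfolding W_def using transpose_mult[OF B PCt]
      assoc_mult_mat[OF transpose_carrier_mat[THEN iffD2, OF PCt] Bt mult_carrier_mat[OF B PCt]] by simp
  then have "W = 0\<^sub>m r s"
    using BtW W right_mult_zero_mat[OF transpose_carrier_mat[THEN iffD2, OF PCt]]
    by (intro transpose_mult_self_eq_0[of _ r s]) auto
  then show ?thesis unfolding W_def using assoc_mult_mat[OF B P Ct] by simp
qed

lemma pinv_schur_complement:
  fixes B C :: "real mat"
  assumes B: "B \<in> carrier_mat r N" and C: "C \<in> carrier_mat s N"
    and BC: "B * transpose_mat C = 0\<^sub>m r s"
    and ker: "\<And>v. v \<in> carrier_vec N \<Longrightarrow> B *\<^sub>v v = 0\<^sub>v r \<Longrightarrow> C *\<^sub>v v = 0\<^sub>v s \<Longrightarrow> v = 0\<^sub>v N"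
  defines "S \<equiv> B * mat_inv (transpose_mat B * B + transpose_mat C * C) * transpose_mat B"
  shows "pinv S = S"
proof -
  let ?A = "transpose_mat B * B + transpose_mat C * C"
  have Bt: "transpose_mat B \<in> carrier_mat N r" and Ct: "transpose_mat C \<in> carrier_mat N s"
    and A: "?A \<in> carrier_mat N N" using B C by simp_all
  obtain P where P: "P \<in> carrier_mat N N" and PA: "P * ?A = 1\<^sub>m N" and AP: "?A * P = 1\<^sub>m N"
    using det_neq_0_imp_inverse[OF A det_gram_sum_neq_0[OF B C ker]] .
  have PBt: "P * transpose_mat B \<in> carrier_mat N r" using P Bt by simp
  have S: "S = B * (P * transpose_mat B)"
    unfolding S_def using mat_inv_eqI[OF A P AP PA] assoc_mult_mat[OF B P Bt] by simp
  have "transpose_mat ?A = ?A"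
    using B C by (simp add: transpose_add[of _ N N] transpose_mult[OF Bt B] transpose_mult[OF Ct C])
  then have Pt: "transpose_mat P = P" by (rule transpose_inverse_of_symmetric[OF A P _ AP PA])
  have "C * P * transpose_mat B = transpose_mat (B * P * transpose_mat C)"
    using B C P Pt by (simp add: transpose_mult[OF B mult_carrier_mat[OF P Ct]] transpose_mult[OF P Ct])
  then have CPBt: "C * (P * transpose_mat B) = 0\<^sub>m s r"
    using gram_sum_inverse_orthogonal[OF B C P BC AP] assoc_mult_mat[OF C P Bt] by simp
  have "transpose_mat B = ?A * (P * transpose_mat B)"
    using assoc_mult_mat[OF A P Bt] AP Bt by simp
  also have "\<dots> = transpose_mat B * (B * (P * transpose_mat B))"
    using add_mult_distrib_mat[OF _ _ PBt, of "transpose_mat B * B" N "transpose_mat C * C"]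
      assoc_mult_mat[OF Bt B PBt] assoc_mult_mat[OF Ct C PBt] CPBt B C Ct
      right_add_zero_mat[OF mult_carrier_mat[OF Bt mult_carrier_mat[OF B PBt]]] by simp
  finally have "transpose_mat B * (B * (P * transpose_mat B)) = transpose_mat B" ..
  then have "(P * transpose_mat B) * (B * (P * transpose_mat B)) = P * transpose_mat B"
    using assoc_mult_mat[OF P Bt mult_carrier_mat[OF B PBt]] by simp
  then have "S * S = S"
    unfolding S using assoc_mult_mat[OF B PBt mult_carrier_mat[OF B PBt]] by simp
  moreover have "transpose_mat S = S"
    unfolding S using transpose_mult[OF B PBt] transpose_mult[OF P Bt] assoc_mult_mat[OF B P Bt] Pt by simp
  moreover have "S \<in> carrier_mat r r" unfolding S using B PBt by simp
  ultimately show ?thesis by (intro pinv_symmetric_idempotent)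
qed

section \<open>The staggered-grid operators\<close>

lemma Bmat_carrier: "Bmat n \<in> carrier_mat n (n - 1)"
  by (simp add: Bmat_def Mmat_def)

text \<open>Discrete integration, \<open>h\<close> times the lower triangular matrix of ones, undoes the
  difference matrix \<open>B\<close>.\<close>

definition Bmat_left_inv :: "nat \<Rightarrow> real mat" where
  "Bmat_left_inv n = mat (n - 1) n (\<lambda>(j, i). if i \<le> j then 1 / real n else 0)"

lemma Bmat_left_inv_carrier: "Bmat_left_inv n \<in> carrier_mat (n - 1) n"
  by (simp add: Bmat_left_inv_def)

lemma Bmat_left_inv_mult_Bmat: "Bmat_left_inv n * Bmat n = 1\<^sub>m (n - 1)"
proof (rule eq_matI)
  fix j c assume "j < dim_row (1\<^sub>m (n - 1))" "c < dim_col (1\<^sub>m (n - 1))"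
  then have j: "j < n - 1" and c: "c < n - 1" by auto
  have "(Bmat_left_inv n * Bmat n) $$ (j, c) = (\<Sum>i<n. Bmat_left_inv n $$ (j, i) * Bmat n $$ (i, c))"
    using j c Bmat_carrier[of n] Bmat_left_inv_carrier[of n] by (simp add: scalar_prod_def atLeast0LessThan)
  also have "\<dots> = (\<Sum>i<n. (if c \<le> j then 1 else 0) * (if i = c then 1 else 0)
                 + (if c + 1 \<le> j then -1 else 0) * (if i = c + 1 then 1 else 0))"
    using j c by (intro sum.cong) (auto simp: Bmat_left_inv_def Bmat_def Mmat_def)
  also have "\<dots> = (if c \<le> j then 1 else 0) + (if c + 1 \<le> j then -1 else 0)"
    by (simp only: sum.distrib sum_distrib_left) (use c in \<open>auto simp: sum_negf\<close>)
  also have "\<dots> = 1\<^sub>m (n - 1) $$ (j, c)" using j c by auto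
  finally show "(Bmat_left_inv n * Bmat n) $$ (j, c) = 1\<^sub>m (n - 1) $$ (j, c)" .
qed (simp_all add: Bmat_left_inv_def Bmat_def Mmat_def)

lemma Bux_carrier: "Bux n \<in> carrier_mat (n * n) (n * (n - 1))"
  and Bvy_carrier: "Bvy n \<in> carrier_mat (n * n) (n * (n - 1))"
  and Bqx_carrier: "Bqx n \<in> carrier_mat (n * (n - 1)) ((n - 1) * (n - 1))"
  and Bqy_carrier: "Bqy n \<in> carrier_mat (n * (n - 1)) ((n - 1) * (n - 1))"
  using Bmat_carrier[of n] by (auto simp: Bux_def Bvy_def Bqx_def Bqy_def mult.commute)

lemma transpose_Bux_mult_Bvy: "transpose_mat (Bux n) * Bvy n = Bqy n * transpose_mat (Bqx n)"
proof -
  have B: "Bmat n \<in> carrier_mat n (n - 1)" and Bt: "transpose_mat (Bmat n) \<in> carrier_mat (n - 1) n"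
    using Bmat_carrier[of n] by auto
  have "transpose_mat (Bux n) * Bvy n = kron (Bmat n) (transpose_mat (Bmat n))"
    unfolding Bux_def Bvy_def transpose_kron transpose_one
    using kron_mult_kron[OF one_carrier_mat Bt B one_carrier_mat] B Bt by simp
  also have "\<dots> = Bqy n * transpose_mat (Bqx n)"
    unfolding Bqy_def Bqx_def transpose_kron transpose_one
    using kron_mult_kron[OF B one_carrier_mat one_carrier_mat Bt] B Bt by simp
  finally show ?thesis .
qed

lemma Bux_mult_Bqy: "Bux n * Bqy n = Bvy n * Bqx n"
proof -
  have B: "Bmat n \<in> carrier_mat n (n - 1)" by (rule Bmat_carrier)
  have "Bux n * Bqy n = kron (Bmat n) (Bmat n)"
    unfolding Bux_def Bqy_def using kron_mult_kron[OF one_carrier_mat B B one_carrier_mat] B by simp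
  also have "\<dots> = Bvy n * Bqx n"
    unfolding Bvy_def Bqx_def using kron_mult_kron[OF B one_carrier_mat one_carrier_mat B] B by simp
  finally show ?thesis .
qed

lemma Bux_kernel_trivial:
  "u \<in> carrier_vec (n * (n - 1)) \<Longrightarrow> Bux n *\<^sub>v u = 0\<^sub>v (n * n) \<Longrightarrow> u = 0\<^sub>v (n * (n - 1))"
  by (rule left_inverse_kernel_trivial[OF _ Bux_carrier, of "kron (1\<^sub>m n) (Bmat_left_inv n)"])
    (use Bmat_left_inv_carrier[of n] in \<open>auto simp: Bux_def kron_one_one Bmat_left_inv_mult_Bmat
      kron_mult_kron[OF one_carrier_mat Bmat_left_inv_carrier one_carrier_mat Bmat_carrier]\<close>)

lemma Bvy_kernel_trivial:
  "w \<in> carrier_vec (n * (n - 1)) \<Longrightarrow> Bvy n *\<^sub>v w = 0\<^sub>v (n * n) \<Longrightarrow> w = 0\<^sub>v (n * (n - 1))"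
  by (rule left_inverse_kernel_trivial[OF _ Bvy_carrier, of "kron (Bmat_left_inv n) (1\<^sub>m n)"])
    (use Bmat_left_inv_carrier[of n] in \<open>auto simp: Bvy_def kron_one_one Bmat_left_inv_mult_Bmat mult.commute
      kron_mult_kron[OF Bmat_left_inv_carrier one_carrier_mat Bmat_carrier one_carrier_mat]\<close>)

lemma BB_carrier: "BB n \<in> carrier_mat (n * n) (n * (n - 1) + n * (n - 1))"
  using Bux_carrier[of n] Bvy_carrier[of n] by (intro carrier_matI) (auto simp: BB_def)

lemma CC_carrier: "CC n \<in> carrier_mat ((n - 1) * (n - 1)) (n * (n - 1) + n * (n - 1))"
  using Bqx_carrier[of n] Bqy_carrier[of n] by (intro carrier_matI) (auto simp: CC_def)

lemma BB_mult_transpose_CC: "BB n * transpose_mat (CC n) = 0\<^sub>m (n * n) ((n - 1) * (n - 1))"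
proof -
  note carriers = Bux_carrier[of n] Bvy_carrier[of n] Bqx_carrier[of n] Bqy_carrier[of n]
  have "BB n * transpose_mat (CC n)
      = - Bux n * transpose_mat (- transpose_mat (Bqy n)) + - Bvy n * transpose_mat (transpose_mat (Bqx n))"
    unfolding BB_def CC_def using carriers by (intro hcat_mult_transpose_hcat) auto
  also have "\<dots> = 0\<^sub>m (n * n) ((n - 1) * (n - 1))"
    using carriers minus_add_uminus_mat[OF mult_carrier_mat[OF Bvy_carrier Bqx_carrier]
        mult_carrier_mat[OF Bvy_carrier Bqx_carrier], symmetric]
    by (simp add: transpose_uminus Bux_mult_Bqy)
  finally show ?thesis .
qed

lemma BB_CC_kernel_trivial:
  assumes v: "v \<in> carrier_vec (n * (n - 1) + n * (n - 1))"
    and BBv: "BB n *\<^sub>v v = 0\<^sub>v (n * n)" and CCv: "CC n *\<^sub>v v = 0\<^sub>v ((n - 1) * (n - 1))"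
  shows "v = 0\<^sub>v (n * (n - 1) + n * (n - 1))"
proof -
  define m where "m = n * (n - 1)"
  note carriers = Bux_carrier[of n] Bvy_carrier[of n] Bqx_carrier[of n] Bqy_carrier[of n]
  define u w where "u = vec_first v m" and "w = vec_last v m"
  have u: "u \<in> carrier_vec m" and w: "w \<in> carrier_vec m" and uw: "v = u @\<^sub>v w"
    using v by (auto simp: u_def w_def m_def)
  have "- (Bux n *\<^sub>v u + Bvy n *\<^sub>v w) = BB n *\<^sub>v v"
    unfolding BB_def uw using carriers u w
    by (subst hcat_mult_append_vec[of _ "n * n" m]) (auto simp: m_def)
  then have "Bux n *\<^sub>v u + Bvy n *\<^sub>v w = 0\<^sub>v (n * n)"
    using BBv carriers u w uminus_zero_vec_eq[of "Bux n *\<^sub>v u + Bvy n *\<^sub>v w" "n * n"] by (simp add: m_def)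
  moreover have "transpose_mat (Bqy n) *\<^sub>v u = transpose_mat (Bqx n) *\<^sub>v w"
  proof -
    have "- (transpose_mat (Bqy n) *\<^sub>v u) + transpose_mat (Bqx n) *\<^sub>v w = CC n *\<^sub>v v"
      unfolding CC_def uw using carriers u w
      by (subst hcat_mult_append_vec[of _ "(n - 1) * (n - 1)" m]) (auto simp: m_def)
    then show ?thesis
      using CCv add_eq_0_vec_imp_eq_uminus[of "- (transpose_mat (Bqy n) *\<^sub>v u)" "(n - 1) * (n - 1)"]
        carriers u w by (simp add: m_def)
  qed
  ultimately have "u = 0\<^sub>v m \<and> w = 0\<^sub>v m"
    using kernel_pair_trivial[of "Bux n" _ m "Bvy n" m "transpose_mat (Bqy n)" _ "transpose_mat (Bqx n)"]
      carriers transpose_Bux_mult_Bvy u w Bux_kernel_trivial Bvy_kernel_trivial by (auto simp: m_def)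
  then show ?thesis unfolding uw m_def by (intro eq_vecI) auto
qed

theorem corollary3:
  fixes n :: nat
  assumes "n \<ge> 2"
  shows "pinv (SN n) = SN n"
  unfolding SN_def AN_def
  by (rule pinv_schur_complement[OF BB_carrier CC_carrier BB_mult_transpose_CC BB_CC_kernel_trivial])

end
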